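(* Let $A\subseteq\Omega$ be arbitrary. Then $\mu^*(A)=0$ if and only if there exists a $\mathcal{P}$-e-process $(E_t)_{t\in\mathbb{N}_0}$ such that $\lim_{t\to\infty}E_t=\infty$ at every point of $A$.
   Context: Standing setup: $(\Omega, (\mathcal{F}_t)_{t\in\mathbb{N}_0}, \mathcal{F})$ is a filtered measurable space with $\mathcal{F} = \sigma\big(\bigcup_{t} \mathcal{F}_t\big)$. A stopping time is a map $\tau:\Omega\to\mathbb{N}_0\cup\{\infty\}$ with $\{\tau \le t\}\in\mathcal{F}_t$ for all $t$; $\mathcal{T}$ denotes the set of all stopping times. $\mathcal{P}$ is an arbitrary family of probability measures on $\mathcal{F}$. The inverse-capital measure is defined for every $A\subseteq\Omega$ by $\mu^*(A) = \inf_{\tau\in\mathcal{T}:\, A\subseteq\{\tau<\infty\}} \sup_{\mathbb{P}\in\mathcal{P}} \mathbb{P}(\tau<\infty)$. A $\mathcal{P}$-e-process is a nonnegative (possibly $[0,\infty]$-valued) process $(E_t)_{t\in\mathbb{N}_0}$ adapted to $(\mathcal{F}_t)$ such that $\mathbb{E}_{\mathbb{P}}[E_\tau]\le 1$ for every $\mathbb{P}\in\mathcal{P}$ and every $\tau\in\mathcal{T}$, with the convention $E_\infty=\limsup_{t\to\infty}E_t$. *)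

theory Defs
  imports "HOL-Probability.Probability"
begin

definition nat_filtration :: "'a set \<Rightarrow> (nat \<Rightarrow> 'a measure) \<Rightarrow> bool" where
  "nat_filtration \<Omega> F \<longleftrightarrow> (\<forall>t. space (F t) = \<Omega>) \<and> (\<forall>s t. s \<le> t \<longrightarrow> sets (F s) \<subseteq> sets (F t))"

definition F_infty :: "'a set \<Rightarrow> (nat \<Rightarrow> 'a measure) \<Rightarrow> 'a measure" where
  "F_infty \<Omega> F = sigma \<Omega> (\<Union>t. sets (F t))"

definition stopping_time_enat :: "'a set \<Rightarrow> (nat \<Rightarrow> 'a measure) \<Rightarrow> ('a \<Rightarrow> enat) \<Rightarrow> bool" where
  "stopping_time_enat \<Omega> F \<tau> \<longleftrightarrow> (\<forall>t. {\<omega>\<in>\<Omega>. \<tau> \<omega> \<le> enat t} \<in> sets (F t))"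

definition stopped_value :: "(nat \<Rightarrow> 'a \<Rightarrow> ennreal) \<Rightarrow> ('a \<Rightarrow> enat) \<Rightarrow> 'a \<Rightarrow> ennreal" where
  "stopped_value E \<tau> \<omega> = (case \<tau> \<omega> of enat t \<Rightarrow> E t \<omega> | \<infinity> \<Rightarrow> limsup (\<lambda>t. E t \<omega>))"

definition e_process :: "'a set \<Rightarrow> (nat \<Rightarrow> 'a measure) \<Rightarrow> 'a measure set \<Rightarrow> (nat \<Rightarrow> 'a \<Rightarrow> ennreal) \<Rightarrow> bool" where
  "e_process \<Omega> F Ps E \<longleftrightarrow>
     (\<forall>t. E t \<in> borel_measurable (F t)) \<and>
     (\<forall>P\<in>Ps. \<forall>\<tau>. stopping_time_enat \<Omega> F \<tau> \<longrightarrow> (\<integral>\<^sup>+ \<omega>. stopped_value E \<tau> \<omega> \<partial>P) \<le> 1)"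

definition mu_star :: "'a set \<Rightarrow> (nat \<Rightarrow> 'a measure) \<Rightarrow> 'a measure set \<Rightarrow> 'a set \<Rightarrow> ennreal" where
  "mu_star \<Omega> F Ps A =
     (INF \<tau>\<in>{\<tau>. stopping_time_enat \<Omega> F \<tau> \<and> A \<subseteq> {\<omega>\<in>\<Omega>. \<tau> \<omega> < \<infinity>}}.
        SUP P\<in>Ps. emeasure P {\<omega>\<in>\<Omega>. \<tau> \<omega> < \<infinity>})"

end

theory Submission
  imports Defs
begin

text \<open>If \<open>\<mu>\<^sup>*(A) = 0\<close>, pick stopping times \<open>\<tau>\<^sub>n\<close> that are finite on \<open>A\<close> and finite with
  probability at most \<open>2\<^sup>-\<^sup>(\<^sup>n\<^sup>+\<^sup>1\<^sup>)\<close> under every \<open>P \<in> \<P>\<close>, and let \<open>E\<^sub>t\<close> count the \<open>n\<close> with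
  \<open>\<tau>\<^sub>n \<le> t\<close>. Each stopped value is dominated by \<open>\<Sum>\<^sub>n 1{\<tau>\<^sub>n < \<infinity>}\<close>, whose expectation is at most
  \<open>1\<close>, and on \<open>A\<close> the count grows without bound. Conversely, if an e-process tends to \<open>\<infinity>\<close> on
  \<open>A\<close>, its hitting time of level \<open>c\<close> is a stopping time finite on \<open>A\<close>, and by Markov's
  inequality applied to the stopped value it is finite with probability at most \<open>1/c\<close>.\<close>

lemma nat_filtration_sets_subset_Pow:
  assumes "nat_filtration \<Omega> F"
  shows "(\<Union>t. sets (F t)) \<subseteq> Pow \<Omega>"
  using assms sets.sets_into_space unfolding nat_filtration_def by fastforce

lemma sets_F_infty_of_sets:
  assumes "nat_filtration \<Omega> F" "S \<in> sets (F t)"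
  shows "S \<in> sets (F_infty \<Omega> F)"
  unfolding F_infty_def using sets_measure_of[OF nat_filtration_sets_subset_Pow[OF assms(1)]] assms(2)
  by (auto intro: sigma_sets.Basic)

lemma stopping_time_enat_finite_measurable:
  assumes "nat_filtration \<Omega> F" "stopping_time_enat \<Omega> F \<tau>"
  shows "{\<omega>\<in>\<Omega>. \<tau> \<omega> < \<infinity>} \<in> sets (F_infty \<Omega> F)"
proof -
  have "{\<omega>\<in>\<Omega>. \<tau> \<omega> < \<infinity>} = (\<Union>t. {\<omega>\<in>\<Omega>. \<tau> \<omega> \<le> enat t})"
    by (auto elim!: less_infinityE dest: enat_ile)
  also have "\<dots> \<in> sets (F_infty \<Omega> F)"
    using assms sets_F_infty_of_sets unfolding stopping_time_enat_def by blast
  finally show ?thesis .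
qed

definition hitting_time :: "(nat \<Rightarrow> 'a \<Rightarrow> ennreal) \<Rightarrow> ennreal \<Rightarrow> 'a \<Rightarrow> enat" where
  "hitting_time E c \<omega> = (if \<exists>t. c \<le> E t \<omega> then enat (LEAST t. c \<le> E t \<omega>) else \<infinity>)"

lemma hitting_time_le_enat_iff:
  "hitting_time E c \<omega> \<le> enat t \<longleftrightarrow> (\<exists>s\<le>t. c \<le> E s \<omega>)"
proof (cases "\<exists>s. c \<le> E s \<omega>")
  case True
  let ?L = "LEAST s. c \<le> E s \<omega>"
  have hit: "hitting_time E c \<omega> = enat ?L" using True by (simp add: hitting_time_def)
  have L: "c \<le> E ?L \<omega>" using True by (rule LeastI_ex)
  show ?thesis
  proof
    assume "hitting_time E c \<omega> \<le> enat t"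
    with hit L show "\<exists>s\<le>t. c \<le> E s \<omega>" by auto
  next
    assume "\<exists>s\<le>t. c \<le> E s \<omega>"
    then obtain s where "s \<le> t" "c \<le> E s \<omega>" by blast
    then have "?L \<le> t" using Least_le[of "\<lambda>s. c \<le> E s \<omega>" s] by linarith
    with hit show "hitting_time E c \<omega> \<le> enat t" by simp
  qed
qed (simp add: hitting_time_def)

lemma hitting_time_finite_iff:
  "hitting_time E c \<omega> < \<infinity> \<longleftrightarrow> (\<exists>t. c \<le> E t \<omega>)"
  by (simp add: hitting_time_def)

lemma le_stopped_value_hitting_time:
  assumes "hitting_time E c \<omega> < \<infinity>"
  shows "c \<le> stopped_value E (hitting_time E c) \<omega>"
proof -
  have ex: "\<exists>t. c \<le> E t \<omega>" using assms unfolding hitting_time_finite_iff .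
  then have "c \<le> E (LEAST t. c \<le> E t \<omega>) \<omega>" by (rule LeastI_ex)
  then show ?thesis using ex by (simp add: stopped_value_def hitting_time_def)
qed

lemma stopping_time_hitting_time:
  assumes filt: "nat_filtration \<Omega> F" and adapted: "\<And>t. E t \<in> borel_measurable (F t)"
  shows "stopping_time_enat \<Omega> F (hitting_time E c)"
  unfolding stopping_time_enat_def
proof
  fix t
  have space: "space (F s) = \<Omega>" for s using filt by (simp add: nat_filtration_def)
  have "{\<omega>\<in>\<Omega>. hitting_time E c \<omega> \<le> enat t} = (\<Union>s\<in>{..t}. {\<omega>\<in>space (F s). c \<le> E s \<omega>})"
    unfolding hitting_time_le_enat_iff space by blast
  also have "\<dots> \<in> sets (F t)"
  proof (rule sets.finite_UN)
    fix s assume "s \<in> {..t}"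
    have "{\<omega>\<in>space (F s). c \<le> E s \<omega>} \<in> sets (F s)"
      using adapted[of s] by measurable
    then show "{\<omega>\<in>space (F s). c \<le> E s \<omega>} \<in> sets (F t)"
      using filt \<open>s \<in> {..t}\<close> unfolding nat_filtration_def by (metis atMost_iff subsetD)
  qed simp
  finally show "{\<omega>\<in>\<Omega>. hitting_time E c \<omega> \<le> enat t} \<in> sets (F t)" .
qed

lemma emeasure_hitting_time_finite_le:
  assumes filt: "nat_filtration \<Omega> F" and E: "e_process \<Omega> F Ps E"
    and P: "P \<in> Ps" "sets P = sets (F_infty \<Omega> F)" and c: "0 < c"
  shows "emeasure P {\<omega>\<in>\<Omega>. hitting_time E (ennreal c) \<omega> < \<infinity>} \<le> ennreal (1 / c)"
proof -
  let ?\<tau> = "hitting_time E (ennreal c)"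
  let ?S = "{\<omega>\<in>\<Omega>. ?\<tau> \<omega> < \<infinity>}"
  have st: "stopping_time_enat \<Omega> F ?\<tau>"
    using E by (intro stopping_time_hitting_time[OF filt]) (simp add: e_process_def)
  have "ennreal c * emeasure P ?S = (\<integral>\<^sup>+ \<omega>. ennreal c * indicator ?S \<omega> \<partial>P)"
    using stopping_time_enat_finite_measurable[OF filt st] P(2)
    by (simp add: nn_integral_cmult_indicator)
  also have "\<dots> \<le> (\<integral>\<^sup>+ \<omega>. stopped_value E ?\<tau> \<omega> \<partial>P)"
    by (intro nn_integral_mono) (auto simp: indicator_def intro: le_stopped_value_hitting_time)
  also have "\<dots> \<le> 1" using E P st unfolding e_process_def by auto
  finally have "ennreal c * emeasure P ?S \<le> 1" .
  then have "ennreal (1 / c) * (ennreal c * emeasure P ?S) \<le> ennreal (1 / c)"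
    using mult_left_mono[of _ 1 "ennreal (1 / c)"] by simp
  then show ?thesis
    using c by (simp add: ennreal_mult''[symmetric] mult.assoc[symmetric])
qed

lemma mu_star_eq_0_if_e_process_tendsto_infinity:
  assumes filt: "nat_filtration \<Omega> F"
    and Ps: "\<forall>P\<in>Ps. sets P = sets (F_infty \<Omega> F)"
    and A: "A \<subseteq> \<Omega>"
    and E: "e_process \<Omega> F Ps E" and lim: "\<forall>\<omega>\<in>A. (\<lambda>t. E t \<omega>) \<longlonglongrightarrow> \<infinity>"
  shows "mu_star \<Omega> F Ps A = 0"
proof -
  have bound: "mu_star \<Omega> F Ps A \<le> ennreal e" if e: "0 < e" for e
  proof -
    let ?\<tau> = "hitting_time E (ennreal (1 / e))"
    have st: "stopping_time_enat \<Omega> F ?\<tau>"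
      using E by (intro stopping_time_hitting_time[OF filt]) (simp add: e_process_def)
    have "A \<subseteq> {\<omega>\<in>\<Omega>. ?\<tau> \<omega> < \<infinity>}"
    proof
      fix \<omega> assume "\<omega> \<in> A"
      then have "\<forall>\<^sub>F t in sequentially. ennreal (1 / e) < E t \<omega>"
        using lim by (intro order_tendstoD(1)) auto
      then obtain t where "ennreal (1 / e) < E t \<omega>" by (auto simp: eventually_sequentially)
      then have "?\<tau> \<omega> < \<infinity>"
        unfolding hitting_time_finite_iff by (blast intro: less_imp_le)
      then show "\<omega> \<in> {\<omega>\<in>\<Omega>. ?\<tau> \<omega> < \<infinity>}" using \<open>\<omega> \<in> A\<close> A by auto
    qed
    then have "mu_star \<Omega> F Ps A \<le> (SUP P\<in>Ps. emeasure P {\<omega>\<in>\<Omega>. ?\<tau> \<omega> < \<infinity>})"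
      unfolding mu_star_def using st by (intro INF_lower) auto
    also have "\<dots> \<le> ennreal e"
    proof (rule SUP_least)
      fix P assume "P \<in> Ps"
      then have "emeasure P {\<omega>\<in>\<Omega>. ?\<tau> \<omega> < \<infinity>} \<le> ennreal (1 / (1 / e))"
        using Ps e by (intro emeasure_hitting_time_finite_le[OF filt E]) auto
      then show "emeasure P {\<omega>\<in>\<Omega>. ?\<tau> \<omega> < \<infinity>} \<le> ennreal e" by simp
    qed
    finally show ?thesis .
  qed
  have "mu_star \<Omega> F Ps A \<le> 0"
  proof (rule ennreal_le_epsilon)
    fix e :: real assume "0 < e"
    then show "mu_star \<Omega> F Ps A \<le> 0 + ennreal e" using bound by simp
  qed
  then show ?thesis by (simp only: le_zero_eq)
qed

definition stopping_count :: "'a set \<Rightarrow> (nat \<Rightarrow> 'a \<Rightarrow> enat) \<Rightarrow> nat \<Rightarrow> 'a \<Rightarrow> ennreal" where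
  "stopping_count \<Omega> T t \<omega> = (\<Sum>n. indicator {\<omega>\<in>\<Omega>. T n \<omega> \<le> enat t} \<omega>)"

lemma stopped_value_stopping_count_le:
  "stopped_value (stopping_count \<Omega> T) \<tau> \<omega> \<le> (\<Sum>n. indicator {\<omega>\<in>\<Omega>. T n \<omega> < \<infinity>} \<omega>)"
proof -
  have bound: "stopping_count \<Omega> T t \<omega> \<le> (\<Sum>n. indicator {\<omega>\<in>\<Omega>. T n \<omega> < \<infinity>} \<omega>)" for t
    unfolding stopping_count_def
    by (intro suminf_le summableI) (auto split: split_indicator dest: enat_ile)
  show ?thesis
  proof (cases "\<tau> \<omega>")
    case enat
    then show ?thesis using bound by (simp add: stopped_value_def)
  next
    case infinity
    then show ?thesis using bound
      by (simp add: stopped_value_def) (intro Limsup_bounded always_eventually, auto)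
  qed
qed

lemma e_process_stopping_count:
  assumes filt: "nat_filtration \<Omega> F"
    and Ps: "\<forall>P\<in>Ps. sets P = sets (F_infty \<Omega> F)"
    and T: "\<And>n. stopping_time_enat \<Omega> F (T n)"
    and small: "\<And>P. P \<in> Ps \<Longrightarrow> (\<Sum>n. emeasure P {\<omega>\<in>\<Omega>. T n \<omega> < \<infinity>}) \<le> 1"
  shows "e_process \<Omega> F Ps (stopping_count \<Omega> T)"
  unfolding e_process_def
proof (intro conjI allI ballI impI)
  fix t
  show "stopping_count \<Omega> T t \<in> borel_measurable (F t)"
    unfolding stopping_count_def using T unfolding stopping_time_enat_def
    by (intro borel_measurable_suminf_order borel_measurable_indicator) auto
next
  fix P \<tau> assume P: "P \<in> Ps"
  have "(\<integral>\<^sup>+ \<omega>. stopped_value (stopping_count \<Omega> T) \<tau> \<omega> \<partial>P)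
      \<le> (\<integral>\<^sup>+ \<omega>. (\<Sum>n. indicator {\<omega>\<in>\<Omega>. T n \<omega> < \<infinity>} \<omega>) \<partial>P)"
    by (intro nn_integral_mono stopped_value_stopping_count_le)
  also have "\<dots> = (\<Sum>n. emeasure P {\<omega>\<in>\<Omega>. T n \<omega> < \<infinity>})"
    using P Ps stopping_time_enat_finite_measurable[OF filt T] by (subst nn_integral_suminf) auto
  also have "\<dots> \<le> 1" using P by (rule small)
  finally show "(\<integral>\<^sup>+ \<omega>. stopped_value (stopping_count \<Omega> T) \<tau> \<omega> \<partial>P) \<le> 1" .
qed

lemma stopping_count_tendsto_infinity:
  assumes "\<omega> \<in> \<Omega>" and finite: "\<And>n. T n \<omega> < \<infinity>"
  shows "(\<lambda>t. stopping_count \<Omega> T t \<omega>) \<longlonglongrightarrow> \<infinity>"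
proof (rule order_tendstoI)
  fix y :: ennreal assume "y < \<infinity>"
  then obtain N where N: "y < of_nat N" using ennreal_Ex_less_of_nat by auto
  have "\<forall>\<^sub>F t in sequentially. T n \<omega> \<le> enat t" for n
  proof -
    obtain k where "T n \<omega> = enat k" using finite[of n] less_infinityE by blast
    then show ?thesis by (auto simp: eventually_sequentially intro!: exI[of _ k])
  qed
  then have "\<forall>\<^sub>F t in sequentially. \<forall>n\<in>{..<N}. T n \<omega> \<le> enat t"
    by (intro eventually_ball_finite) auto
  moreover have "y < stopping_count \<Omega> T t \<omega>" if "\<forall>n\<in>{..<N}. T n \<omega> \<le> enat t" for t
  proof -
    have "(of_nat N :: ennreal) = (\<Sum>n<N. indicator {\<omega>\<in>\<Omega>. T n \<omega> \<le> enat t} \<omega>)"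
      using that \<open>\<omega> \<in> \<Omega>\<close> by simp
    also have "\<dots> \<le> stopping_count \<Omega> T t \<omega>"
      unfolding stopping_count_def by (intro sum_le_suminf summableI) auto
    finally show ?thesis using N by (rule less_le_trans[rotated])
  qed
  ultimately show "\<forall>\<^sub>F t in sequentially. y < stopping_count \<Omega> T t \<omega>"
    by (rule eventually_mono)
qed simp

lemma mu_star_eq_0_obtain_stopping_times:
  assumes "mu_star \<Omega> F Ps A = 0"
  obtains T where "\<And>n. stopping_time_enat \<Omega> F (T n)" "\<And>n. A \<subseteq> {\<omega>\<in>\<Omega>. T n \<omega> < \<infinity>}"
    "\<And>n P. P \<in> Ps \<Longrightarrow> emeasure P {\<omega>\<in>\<Omega>. T n \<omega> < \<infinity>} \<le> ennreal ((1/2) ^ Suc n)"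
proof -
  have "\<forall>n. \<exists>\<tau>. stopping_time_enat \<Omega> F \<tau> \<and> A \<subseteq> {\<omega>\<in>\<Omega>. \<tau> \<omega> < \<infinity>} \<and>
      (SUP P\<in>Ps. emeasure P {\<omega>\<in>\<Omega>. \<tau> \<omega> < \<infinity>}) < ennreal ((1/2) ^ Suc n)"
  proof
    fix n
    have "mu_star \<Omega> F Ps A < ennreal ((1/2) ^ Suc n)" using assms by simp
    then show "\<exists>\<tau>. stopping_time_enat \<Omega> F \<tau> \<and> A \<subseteq> {\<omega>\<in>\<Omega>. \<tau> \<omega> < \<infinity>} \<and>
        (SUP P\<in>Ps. emeasure P {\<omega>\<in>\<Omega>. \<tau> \<omega> < \<infinity>}) < ennreal ((1/2) ^ Suc n)"
      unfolding mu_star_def INF_less_iff by auto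
  qed
  then obtain T where T: "\<forall>n. stopping_time_enat \<Omega> F (T n) \<and> A \<subseteq> {\<omega>\<in>\<Omega>. T n \<omega> < \<infinity>} \<and>
      (SUP P\<in>Ps. emeasure P {\<omega>\<in>\<Omega>. T n \<omega> < \<infinity>}) < ennreal ((1/2) ^ Suc n)"
    by (rule choice[THEN exE])
  have "emeasure P {\<omega>\<in>\<Omega>. T n \<omega> < \<infinity>} \<le> ennreal ((1/2) ^ Suc n)" if "P \<in> Ps" for n P
    using SUP_upper[OF that, of "\<lambda>Q. emeasure Q {\<omega>\<in>\<Omega>. T n \<omega> < \<infinity>}"] T by (meson order.trans less_imp_le)
  with T show ?thesis using that by blast
qed

lemma e_process_tendsto_infinity_if_mu_star_eq_0:
  assumes filt: "nat_filtration \<Omega> F"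
    and Ps: "\<forall>P\<in>Ps. sets P = sets (F_infty \<Omega> F)"
    and mu: "mu_star \<Omega> F Ps A = 0"
  shows "\<exists>E. e_process \<Omega> F Ps E \<and> (\<forall>\<omega>\<in>A. (\<lambda>t. E t \<omega>) \<longlonglongrightarrow> \<infinity>)"
proof -
  obtain T where T: "\<And>n. stopping_time_enat \<Omega> F (T n)"
    and cover: "\<And>n. A \<subseteq> {\<omega>\<in>\<Omega>. T n \<omega> < \<infinity>}"
    and small: "\<And>n P. P \<in> Ps \<Longrightarrow> emeasure P {\<omega>\<in>\<Omega>. T n \<omega> < \<infinity>} \<le> ennreal ((1/2) ^ Suc n)"
    using mu_star_eq_0_obtain_stopping_times[OF mu] by blast
  have "(\<Sum>n. emeasure P {\<omega>\<in>\<Omega>. T n \<omega> < \<infinity>}) \<le> 1" if "P \<in> Ps" for P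
  proof -
    have "(\<Sum>n. emeasure P {\<omega>\<in>\<Omega>. T n \<omega> < \<infinity>}) \<le> (\<Sum>n. ennreal ((1/2) ^ Suc n))"
      using small[OF that] by (intro suminf_le summableI)
    also have "\<dots> = 1"
      using power_half_series by (subst suminf_ennreal_eq) auto
    finally show ?thesis .
  qed
  then have "e_process \<Omega> F Ps (stopping_count \<Omega> T)"
    by (rule e_process_stopping_count[OF filt Ps T])
  moreover have "(\<lambda>t. stopping_count \<Omega> T t \<omega>) \<longlonglongrightarrow> \<infinity>" if "\<omega> \<in> A" for \<omega>
    using cover that by (intro stopping_count_tendsto_infinity) auto
  ultimately show ?thesis by blast
qed

theorem mainTheorem3:
  fixes \<Omega> :: "'a set" and F :: "nat \<Rightarrow> 'a measure" and Ps :: "'a measure set" and A :: "'a set"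
  assumes "nat_filtration \<Omega> F"
    and "\<forall>P\<in>Ps. prob_space P \<and> sets P = sets (F_infty \<Omega> F)"
    and "A \<subseteq> \<Omega>"
  shows "mu_star \<Omega> F Ps A = 0 \<longleftrightarrow>
         (\<exists>E. e_process \<Omega> F Ps E \<and> (\<forall>\<omega>\<in>A. (\<lambda>t. E t \<omega>) \<longlonglongrightarrow> \<infinity>))"
proof -
  \<comment> \<open>Only the \<sigma>-algebras of the measures in \<open>Ps\<close> matter.\<close>
  have sets: "\<forall>P\<in>Ps. sets P = sets (F_infty \<Omega> F)" using assms(2) by blast
  show ?thesis
    using e_process_tendsto_infinity_if_mu_star_eq_0[OF assms(1) sets]
      mu_star_eq_0_if_e_process_tendsto_infinity[OF assms(1) sets assms(3)]
    by blast
qed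

end
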